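(* Let $m=2$ attributes take values in $\{1,\dots,d\}$, let $\mathcal{Z}^{\mathsf{train}}\subseteq\{1,\dots,d\}^2$, and consider the graph on $\mathcal{Z}^{\mathsf{train}}$ in which two attribute vectors are adjacent iff their Hamming distance is one. Let $C_1,\dots,C_K$ be the maximal connected components of this graph, so $\mathcal{Z}^{\mathsf{train}}=C_1\cup\dots\cup C_K$. Then: (i) if a connected component $C$ is contiguous, then $\mathsf{DAff}(C)$ equals the smallest subgrid containing $C$; (ii) if $C_1,\dots,C_K$ are all contiguous, then $\mathsf{DAff}(C_1\cup\dots\cup C_K)$ equals the union over $j$ of the smallest subgrids containing $C_j$.
   Context: For $z=(z_1,z_2)$, $\sigma(z)\in\{0,1\}^{2d}$ is the concatenation of the one-hot encodings of $z_1,z_2$, and for finite $\mathcal{A}=\{z^{(1)},\dots,z^{(k)}\}\subseteq\{1,\dots,d\}^2$, $\mathsf{DAff}(\mathcal{A})=\{z\in\{1,\dots,d\}^2:\exists\alpha\in\mathbb{R}^k,\ \sum_i\alpha_i=1,\ \sigma(z)=\sum_i\alpha_i\sigma(z^{(i)})\}$. A set $C$ is contiguous if for each coordinate $j\in\{1,2\}$, with $\min_j,\max_j$ the smallest and largest values of the $j$-th coordinate over $C$, every value in $\{\min_j,\min_j+1,\dots,\max_j\}$ is taken by the $j$-th coordinate of some point of $C$. The smallest subgrid containing such $C$ is $\{\min_1,\dots,\max_1\}\times\{\min_2,\dots,\max_2\}$. *)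

theory Defs
  imports Complex_Main
begin

type_synonym attr = "nat \<times> nat"

text \<open>sigma(z) in {0,1}^{2d}: coordinates 1..d one-hot encode z_1, coordinates d+1..2d one-hot encode z_2
  (all other indices are 0).\<close>
definition sigma :: "nat \<Rightarrow> attr \<Rightarrow> nat \<Rightarrow> real" where
  "sigma d z i = (if i = fst z then 1 else 0) + (if i = d + snd z then 1 else 0)"

definition grid :: "nat \<Rightarrow> attr set" where
  "grid d = {1..d} \<times> {1..d}"

definition DAff :: "nat \<Rightarrow> attr set \<Rightarrow> attr set" where
  "DAff d A = {z \<in> grid d. \<exists>\<alpha> :: attr \<Rightarrow> real. (\<Sum>a\<in>A. \<alpha> a) = 1 \<and>
                 (\<forall>i. sigma d z i = (\<Sum>a\<in>A. \<alpha> a * sigma d a i))}"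

definition hamming1 :: "attr \<Rightarrow> attr \<Rightarrow> bool" where
  "hamming1 z w \<longleftrightarrow> (fst z = fst w \<and> snd z \<noteq> snd w) \<or> (fst z \<noteq> fst w \<and> snd z = snd w)"

definition adjZ :: "attr set \<Rightarrow> attr \<Rightarrow> attr \<Rightarrow> bool" where
  "adjZ Z z w \<longleftrightarrow> z \<in> Z \<and> w \<in> Z \<and> hamming1 z w"

definition component :: "attr set \<Rightarrow> attr set \<Rightarrow> bool" where
  "component Z C \<longleftrightarrow> (\<exists>z\<in>Z. C = {w. (adjZ Z)\<^sup>*\<^sup>* z w})"

definition contiguous :: "attr set \<Rightarrow> bool" where
  "contiguous C \<longleftrightarrow>
     (\<forall>v. Min (fst ` C) \<le> v \<and> v \<le> Max (fst ` C) \<longrightarrow> v \<in> fst ` C) \<and>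
     (\<forall>v. Min (snd ` C) \<le> v \<and> v \<le> Max (snd ` C) \<longrightarrow> v \<in> snd ` C)"

definition subgrid :: "attr set \<Rightarrow> attr set" where
  "subgrid C = {Min (fst ` C)..Max (fst ` C)} \<times> {Min (snd ` C)..Max (snd ` C)}"

end

theory Submission
  imports Defs
begin

text \<open>Coordinates 1..d of the one-hot encoding record the row and coordinates d+1..2d the
  column of a point.  Hence if sigma z is an affine combination of the sigma a, a \<in> A, the
  coefficients summed over the points of A lying in a set R of rows give the indicator of
  fst z \<in> R, and likewise for a set S of columns.  If every point of A lies in R exactly when
  it lies in S, then fst z \<in> R \<longleftrightarrow> snd z \<in> S.  For a component C of Z take
  R = fst ` C and S = snd ` C: a training point sharing a row or a column with C belongs to C.
  So DAff d Z lies in the union of the rectangles fst ` C \<times> snd ` C.  Conversely,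
  sigma (r, c') = sigma (r, c) - sigma (r', c) + sigma (r', c') shows that DAff d C is closed
  under completing rectangles, and walking along Hamming edges fills fst ` C \<times> snd ` C.
  Contiguity makes this product the smallest subgrid containing C.\<close>

lemma finite_grid: "finite (grid d)"
  by (simp add: grid_def)

lemma sigma_grid:
  assumes "a \<in> grid d" "r \<in> {1..d}"
  shows "sigma d a r = of_bool (fst a = r)" "sigma d a (d + r) = of_bool (snd a = r)"
  using assms by (auto simp: sigma_def grid_def)

lemma sum_of_bool_mem_eq:
  fixes \<alpha> :: "'a \<Rightarrow> real"
  assumes "finite R"
    and point: "\<And>r. r \<in> R \<Longrightarrow> of_bool (f z = r) = (\<Sum>a\<in>A. \<alpha> a * of_bool (f a = r))"
  shows "of_bool (f z \<in> R) = (\<Sum>a\<in>A. \<alpha> a * of_bool (f a \<in> R))"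
proof -
  have indicator: "of_bool (x \<in> R) = (\<Sum>r\<in>R. of_bool (x = r) :: real)" for x
    using \<open>finite R\<close> by (simp add: of_bool_def sum.delta')
  have "of_bool (f z \<in> R) = (\<Sum>r\<in>R. \<Sum>a\<in>A. \<alpha> a * of_bool (f a = r))"
    by (simp add: indicator point)
  also have "\<dots> = (\<Sum>a\<in>A. \<alpha> a * (\<Sum>r\<in>R. of_bool (f a = r)))"
    by (subst sum.swap) (simp add: sum_distrib_left)
  also have "\<dots> = (\<Sum>a\<in>A. \<alpha> a * of_bool (f a \<in> R))"
    by (simp add: indicator)
  finally show ?thesis .
qed

lemma DAff_marginals:
  assumes A: "A \<subseteq> grid d" and z: "z \<in> grid d"
    and rep: "\<forall>i. sigma d z i = (\<Sum>a\<in>A. \<alpha> a * sigma d a i)"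
    and R: "R \<subseteq> {1..d}"
  shows "of_bool (fst z \<in> R) = (\<Sum>a\<in>A. \<alpha> a * of_bool (fst a \<in> R))"
    and "of_bool (snd z \<in> R) = (\<Sum>a\<in>A. \<alpha> a * of_bool (snd a \<in> R))"
proof -
  have R_finite: "finite R"
    using R finite_subset by blast
  have sigma_fst: "sigma d a r = of_bool (fst a = r)"
    and sigma_snd: "sigma d a (d + r) = of_bool (snd a = r)"
    if "a \<in> insert z A" "r \<in> R" for a r
    using sigma_grid that A z R by blast+
  show "of_bool (fst z \<in> R) = (\<Sum>a\<in>A. \<alpha> a * of_bool (fst a \<in> R))"
  proof (rule sum_of_bool_mem_eq[OF R_finite])
    fix r assume "r \<in> R"
    then show "of_bool (fst z = r) = (\<Sum>a\<in>A. \<alpha> a * of_bool (fst a = r))"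
      using rep[rule_format, of r] sigma_fst by (simp cong: sum.cong)
  qed
  show "of_bool (snd z \<in> R) = (\<Sum>a\<in>A. \<alpha> a * of_bool (snd a \<in> R))"
  proof (rule sum_of_bool_mem_eq[OF R_finite])
    fix r assume "r \<in> R"
    then show "of_bool (snd z = r) = (\<Sum>a\<in>A. \<alpha> a * of_bool (snd a = r))"
      using rep[rule_format, of "d + r"] sigma_snd by (simp cong: sum.cong)
  qed
qed

lemma DAff_fst_mem_iff_snd_mem:
  assumes A: "A \<subseteq> grid d" and z: "z \<in> DAff d A"
    and R: "R \<subseteq> {1..d}" and S: "S \<subseteq> {1..d}"
    and linked: "\<And>a. a \<in> A \<Longrightarrow> fst a \<in> R \<longleftrightarrow> snd a \<in> S"
  shows "fst z \<in> R \<longleftrightarrow> snd z \<in> S"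
proof -
  obtain \<alpha> where zg: "z \<in> grid d" and rep: "\<forall>i. sigma d z i = (\<Sum>a\<in>A. \<alpha> a * sigma d a i)"
    using z unfolding DAff_def by blast
  have "(of_bool (fst z \<in> R) :: real) = (\<Sum>a\<in>A. \<alpha> a * of_bool (fst a \<in> R))"
    using DAff_marginals(1)[OF A zg rep R] .
  also have "\<dots> = (\<Sum>a\<in>A. \<alpha> a * of_bool (snd a \<in> S))"
    using linked by (auto cong: sum.cong)
  also have "\<dots> = of_bool (snd z \<in> S)"
    using DAff_marginals(2)[OF A zg rep S] by simp
  finally show ?thesis
    by (simp add: of_bool_eq_iff)
qed

lemma DAff_subset_Times:
  assumes "A \<subseteq> grid d"
  shows "DAff d A \<subseteq> fst ` A \<times> snd ` A"
proof
  fix z assume z: "z \<in> DAff d A"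
  then have z_grid: "fst z \<in> {1..d}" "snd z \<in> {1..d}"
    by (auto simp: DAff_def grid_def)
  have A_grid: "fst a \<in> {1..d}" "snd a \<in> {1..d}" if "a \<in> A" for a
    using that assms by (auto simp: grid_def)
  have "fst z \<in> fst ` A \<longleftrightarrow> snd z \<in> {1..d}"
    by (rule DAff_fst_mem_iff_snd_mem[OF assms z]) (use A_grid in auto)
  moreover have "fst z \<in> {1..d} \<longleftrightarrow> snd z \<in> snd ` A"
    by (rule DAff_fst_mem_iff_snd_mem[OF assms z]) (use A_grid in auto)
  ultimately show "z \<in> fst ` A \<times> snd ` A"
    using z_grid by (simp add: mem_Times_iff)
qed

lemma subset_DAff:
  assumes "A \<subseteq> grid d" "finite A"
  shows "A \<subseteq> DAff d A"
proof
  fix z assume "z \<in> A"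
  then have "(\<Sum>a\<in>A. if a = z then 1 else 0 :: real) = 1"
    and "sigma d z i = (\<Sum>a\<in>A. (if a = z then 1 else 0) * sigma d a i)" for i
    using assms(2) by (simp_all add: if_distrib[of "\<lambda>x. x * _"] cong: if_cong)
  then show "z \<in> DAff d A"
    using \<open>z \<in> A\<close> assms(1) unfolding DAff_def by blast
qed

lemma DAff_mono:
  assumes "A \<subseteq> B" "finite B"
  shows "DAff d A \<subseteq> DAff d B"
proof
  fix z assume "z \<in> DAff d A"
  then obtain \<alpha> where z: "z \<in> grid d" "(\<Sum>a\<in>A. \<alpha> a) = 1"
    "\<forall>i. sigma d z i = (\<Sum>a\<in>A. \<alpha> a * sigma d a i)"
    unfolding DAff_def by blast
  define \<beta> where "\<beta> a = (if a \<in> A then \<alpha> a else 0)" for a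
  have "(\<Sum>a\<in>B. \<beta> a) = (\<Sum>a\<in>A. \<alpha> a)"
    and "(\<Sum>a\<in>B. \<beta> a * sigma d a i) = (\<Sum>a\<in>A. \<alpha> a * sigma d a i)" for i
    using assms by (auto simp: \<beta>_def intro: sum.mono_neutral_cong_right)
  then show "z \<in> DAff d B"
    using z unfolding DAff_def by auto
qed

lemma DAff_rectangle:
  assumes "(r, c) \<in> DAff d A" "(r', c) \<in> DAff d A" "(r', c') \<in> DAff d A"
  shows "(r, c') \<in> DAff d A"
proof -
  obtain \<alpha> where
    \<alpha>: "(\<Sum>a\<in>A. \<alpha> a) = 1" "\<forall>i. sigma d (r, c) i = (\<Sum>a\<in>A. \<alpha> a * sigma d a i)"
    using assms(1) unfolding DAff_def by blast
  obtain \<beta> where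
    \<beta>: "(\<Sum>a\<in>A. \<beta> a) = 1" "\<forall>i. sigma d (r', c) i = (\<Sum>a\<in>A. \<beta> a * sigma d a i)"
    using assms(2) unfolding DAff_def by blast
  obtain \<gamma> where
    \<gamma>: "(\<Sum>a\<in>A. \<gamma> a) = 1" "\<forall>i. sigma d (r', c') i = (\<Sum>a\<in>A. \<gamma> a * sigma d a i)"
    using assms(3) unfolding DAff_def by blast
  have grid: "(r, c') \<in> grid d"
    using assms(1,3) by (auto simp: DAff_def grid_def)
  have "sigma d (r, c') i = (\<Sum>a\<in>A. (\<alpha> a - \<beta> a + \<gamma> a) * sigma d a i)" for i
  proof -
    have "sigma d (r, c') i = sigma d (r, c) i - sigma d (r', c) i + sigma d (r', c') i"
      by (simp add: sigma_def)
    then show ?thesis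
      using \<alpha>(2) \<beta>(2) \<gamma>(2) by (simp add: algebra_simps sum.distrib sum_subtractf)
  qed
  moreover have "(\<Sum>a\<in>A. \<alpha> a - \<beta> a + \<gamma> a) = 1"
    using \<alpha>(1) \<beta>(1) \<gamma>(1) by (simp add: sum.distrib sum_subtractf)
  ultimately show ?thesis
    using grid unfolding DAff_def by blast
qed

lemma adjZ_rtranclp_mem:
  assumes "(adjZ Z)\<^sup>*\<^sup>* z w" "z \<in> Z"
  shows "w \<in> Z"
  using assms by (induction rule: rtranclp_induct) (auto simp: adjZ_def)

lemma component_subset: "component Z C \<Longrightarrow> C \<subseteq> Z"
  unfolding component_def using adjZ_rtranclp_mem by blast

lemma Union_components: "\<Union>{C. component Z C} = Z"
proof
  show "\<Union>{C. component Z C} \<subseteq> Z"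
    using component_subset by blast
  show "Z \<subseteq> \<Union>{C. component Z C}"
  proof
    fix z assume "z \<in> Z"
    then have "component Z {w. (adjZ Z)\<^sup>*\<^sup>* z w}"
      unfolding component_def by blast
    then show "z \<in> \<Union>{C. component Z C}" by blast
  qed
qed

lemma component_mem_iff:
  assumes C: "component Z C" and w: "w \<in> Z"
  shows "fst w \<in> fst ` C \<longleftrightarrow> w \<in> C" and "snd w \<in> snd ` C \<longleftrightarrow> w \<in> C"
proof -
  obtain z0 where C_def: "C = {w. (adjZ Z)\<^sup>*\<^sup>* z0 w}"
    using C unfolding component_def by blast
  have "w \<in> C" if u: "u \<in> C" and line: "fst u = fst w \<or> snd u = snd w" for u
  proof (cases "u = w")
    case False
    with line u w component_subset[OF C] have "adjZ Z u w"
      by (auto simp: adjZ_def hamming1_def prod_eq_iff)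
    with u show ?thesis
      unfolding C_def by (auto intro: rtranclp.rtrancl_into_rtrancl)
  qed (use u in simp)
  then show "fst w \<in> fst ` C \<longleftrightarrow> w \<in> C" and "snd w \<in> snd ` C \<longleftrightarrow> w \<in> C"
    by auto
qed

lemma DAff_component:
  assumes Z: "Z \<subseteq> grid d" and C: "component Z C"
  shows "DAff d C = fst ` C \<times> snd ` C"
proof
  have C_grid: "C \<subseteq> grid d"
    using component_subset[OF C] Z by blast
  then have C_DAff: "C \<subseteq> DAff d C"
    using subset_DAff finite_subset[OF _ finite_grid] by blast
  show "DAff d C \<subseteq> fst ` C \<times> snd ` C"
    using DAff_subset_Times[OF C_grid] .
  obtain z0 where z0: "z0 \<in> Z" and C_def: "C = {w. (adjZ Z)\<^sup>*\<^sup>* z0 w}"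
    using C unfolding component_def by blast
  have z0C: "z0 \<in> C"
    unfolding C_def by simp
  have cross: "(fst z0, snd v) \<in> DAff d C \<and> (fst v, snd z0) \<in> DAff d C"
    if "(adjZ Z)\<^sup>*\<^sup>* z0 v" for v
    using that
  proof (induction rule: rtranclp_induct)
    case base
    then show ?case using C_DAff z0C by auto
  next
    case (step v v')
    have "v \<in> C" "v' \<in> C"
      using step unfolding C_def by (auto intro: rtranclp.rtrancl_into_rtrancl)
    then have v: "(fst v, snd v) \<in> DAff d C" and v': "(fst v', snd v') \<in> DAff d C"
      using C_DAff by auto
    have "fst v = fst v' \<or> snd v = snd v'"
      using step(2) by (auto simp: adjZ_def hamming1_def)
    then show ?case
    proof
      assume "fst v = fst v'"
      then show ?case
        using step.IH DAff_rectangle[of "fst z0" "snd v" d C "fst v" "snd v'"] v v' by auto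
    next
      assume "snd v = snd v'"
      then show ?case
        using step.IH DAff_rectangle[of "fst v'" "snd v'" d C "fst v" "snd z0"] v v' by auto
    qed
  qed
  show "fst ` C \<times> snd ` C \<subseteq> DAff d C"
  proof clarify
    fix u v assume "u \<in> C" "v \<in> C"
    then have "(fst u, snd z0) \<in> DAff d C" "(fst z0, snd v) \<in> DAff d C"
      using cross unfolding C_def by auto
    then show "(fst u, snd v) \<in> DAff d C"
      using DAff_rectangle[of "fst u" "snd z0" d C "fst z0" "snd v"] C_DAff z0C by auto
  qed
qed

lemma DAff_eq_Union_components:
  assumes Z: "Z \<subseteq> grid d"
  shows "DAff d Z = \<Union>{fst ` C \<times> snd ` C | C. component Z C}"
proof
  show "\<Union>{fst ` C \<times> snd ` C | C. component Z C} \<subseteq> DAff d Z"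
  proof
    fix z assume "z \<in> \<Union>{fst ` C \<times> snd ` C | C. component Z C}"
    then obtain C where z: "z \<in> fst ` C \<times> snd ` C" and C: "component Z C"
      by blast
    then have "z \<in> DAff d C"
      using DAff_component[OF Z C] by simp
    then show "z \<in> DAff d Z"
      using DAff_mono[OF component_subset[OF C] finite_subset[OF Z finite_grid]] by blast
  qed
  show "DAff d Z \<subseteq> \<Union>{fst ` C \<times> snd ` C | C. component Z C}"
  proof
    fix z assume z: "z \<in> DAff d Z"
    then obtain a where a: "a \<in> Z" "fst a = fst z"
      using DAff_subset_Times[OF Z] by force
    define C where "C = {w. (adjZ Z)\<^sup>*\<^sup>* a w}"
    have C: "component Z C"
      using a unfolding C_def component_def by blast
    have "a \<in> C"
      unfolding C_def by simp
    then have "fst z \<in> fst ` C"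
      using a(2) by (metis image_eqI)
    have C_grid: "fst ` C \<subseteq> {1..d}" "snd ` C \<subseteq> {1..d}"
      using component_subset[OF C] Z by (auto simp: grid_def)
    have "fst z \<in> fst ` C \<longleftrightarrow> snd z \<in> snd ` C"
      by (rule DAff_fst_mem_iff_snd_mem[OF Z z]) (use component_mem_iff[OF C] C_grid in auto)
    with \<open>fst z \<in> fst ` C\<close> have "z \<in> fst ` C \<times> snd ` C"
      by (simp add: mem_Times_iff)
    with C show "z \<in> \<Union>{fst ` C \<times> snd ` C | C. component Z C}"
      by blast
  qed
qed

lemma atLeastAtMost_Min_Max_eq:
  fixes S :: "'a::linorder set"
  assumes "finite S" and gap_free: "\<forall>v. Min S \<le> v \<and> v \<le> Max S \<longrightarrow> v \<in> S"
  shows "{Min S..Max S} = S"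
proof
  show "{Min S..Max S} \<subseteq> S"
    using gap_free by auto
  show "S \<subseteq> {Min S..Max S}"
  proof
    fix x assume "x \<in> S"
    then show "x \<in> {Min S..Max S}"
      using Min_le[OF \<open>finite S\<close>] Max_ge[OF \<open>finite S\<close>] by simp
  qed
qed

lemma subgrid_eq_Times:
  assumes "finite C" "contiguous C"
  shows "subgrid C = fst ` C \<times> snd ` C"
proof -
  note gap_free = assms(2)[unfolded contiguous_def]
  show ?thesis
    unfolding subgrid_def
    using atLeastAtMost_Min_Max_eq[OF finite_imageI[OF assms(1)] conjunct1[OF gap_free]]
      atLeastAtMost_Min_Max_eq[OF finite_imageI[OF assms(1)] conjunct2[OF gap_free]]
    by (rule arg_cong2[where f = "(\<times>)"])
qed

theorem theorem9:
  fixes d :: nat and Z :: "attr set"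
  assumes "Z \<subseteq> grid d"
  shows "(\<forall>C. component Z C \<and> contiguous C \<longrightarrow> DAff d C = subgrid C)
       \<and> ((\<forall>C. component Z C \<longrightarrow> contiguous C) \<longrightarrow>
            DAff d (\<Union>{C. component Z C}) = (\<Union>{subgrid C | C. component Z C}))"
proof -
  have finite: "finite C" if "component Z C" for C
    using component_subset[OF that] assms finite_subset[OF _ finite_grid] by blast
  have "DAff d C = subgrid C" if "component Z C" "contiguous C" for C
    using DAff_component[OF assms] subgrid_eq_Times finite that by simp
  moreover have "DAff d (\<Union>{C. component Z C}) = \<Union>{subgrid C | C. component Z C}"
    if "\<forall>C. component Z C \<longrightarrow> contiguous C"
  proof -
    have "subgrid C = fst ` C \<times> snd ` C" if "component Z C" for C
      using subgrid_eq_Times finite that \<open>\<forall>C. component Z C \<longrightarrow> contiguous C\<close> by blast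
    then show ?thesis
      unfolding Union_components DAff_eq_Union_components[OF assms] by blast
  qed
  ultimately show ?thesis by blast
qed

end
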